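(* Let $\mathit{Ds}$ be a declaration table of the trait calculus described in the context, $t$ a trait name and $\mathit{Name}$ a declaration name with $\mathit{Ds}(t)=\mathit{Body}$ and $\mathit{Ds}(\mathit{Name})=\mathit{Body}'$. If $\mathit{Ds};t\vdash\mathit{Body}:\mathit{OK}$ and $\mathit{Body}[\mathtt{makeAbstract}\ m]=\mathit{Body}'$, then $\mathit{Ds};\mathit{Name}\vdash\mathit{Body}':\mathit{OK}$.
   Context: Trait calculus (\textsc{TraitCbC}). A program is a list $\mathit{Ds}$ of declarations $\mathit{Name}=E$ (names unique, so $\mathit{Ds}$ is a map), where $\mathit{Name}$ is a trait name $t$ or class name $C$, and trait expressions are $E::=\mathit{Body}\mid t\mid E+E\mid E[\mathtt{makeAbstract}\ m]$. A body is $\{\mathtt{interface}?\ [\mathit{Cs}]\ \mathit{Ms}\}$ with $\mathit{Cs}$ implemented interface names and $\mathit{Ms}$ a list of methods with distinct names. A method is $\mathit{MH}\ e?;$ (abstract if $e$ is absent) with header $S\ \mathtt{method}\ C\ m(C_1x_1\dots C_nx_n)$; $S$ is a specification with precondition $\mathit{Pre}(S)$ and postcondition $\mathit{Post}(S)$ in a parametric logic supporting a commutative, associative conjunction $\&$ and a transitive implication $\Rightarrow$. Expressions are $e::=x\mid e.m(e_1\dots e_n)\mid\mathtt{new}\ C(e_1\dots e_n)$; fields are emulated by argument-less abstract methods (getters). Verification is assumed sound and modular. Typing judgment $\Gamma\vdash e:C\dashv P\models P'$ (knowledge $P$, obligation $P'$): variables give $\Gamma\vdash x:\Gamma(x)\dashv\mathtt{result}:\Gamma(x)\&\mathtt{result}=x\models\mathit{true}$;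 a call $e_0.m(e_1\dots e_n)$ to a method $S\ \mathtt{method}\ C\ m(C_1x_1\dots C_nx_n)$ of $C_0$, with $\Gamma\vdash e_i:C_i\dashv P_i\models P'_i$, fresh $x'_i$ and $S'=S[\mathtt{this}:=x'_0,x_i:=x'_i]$, has type $C$, knowledge $\mathtt{result}:C\&P_0[\mathtt{result}:=x'_0]\&\dots\&P_n[\mathtt{result}:=x'_n]\&(\mathit{Pre}(S')\Rightarrow\mathit{Post}(S'))$ and obligation $P'_0\&\dots\&P'_n\&\mathit{Pre}(S')$; an object creation $\mathtt{new}\ C(e_1\dots e_n)$, where $C$'s getters are $S_i\ \mathtt{method}\ C_i\ x_i()$, has type $C$, knowledge $\mathtt{result}:C\&\bigwedge_i(P_i[\mathtt{result}:=x'_i]\&(\mathit{Pre}(S'_i)\Rightarrow\mathtt{result}.x_i()=x'_i))$ and obligation $\bigwedge_iP'_i\&\bigwedge_i\mathit{Pre}(S'_i)$ with $S'_i=S_i[\mathtt{this}:=\mathtt{result}]$; subsumption allows replacing the type by a supertype. A concrete method $S\ \mathtt{method}\ C\ m(C_1x_1\dots C_nx_n)\ e;$ satisfies $\mathit{Ds};\mathit{Name}\vdash M:\mathit{OK}$ iff for $\Gamma=\mathtt{this}:\mathit{Name},x_1:C_1,\dots,x_n:C_n$ we have $\Gamma\vdash e:C\dashv P\models P'$ and the verifier proves $\mathit{Ds}\vdash(\Gamma\&\mathit{Pre}(S)\&P)\models(P'\&\mathit{Post}(S))$; abstract methods are always OK; $\mathit{Ds};\mathit{Name}\vdash\mathit{Body}:\mathit{OK}$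 iff all its methods are OK. Body abstraction: $\{[\mathit{Cs}]\ \mathit{Ms}_1\ S\ \mathtt{method}\ C\ m(\dots)\ e?;\ \mathit{Ms}_2\}[\mathtt{makeAbstract}\ m]=\{[\mathit{Cs}]\ \mathit{Ms}_1\ S\ \mathtt{method}\ C\ m(\dots);\ \mathit{Ms}_2\}$, i.e. the implementation of $m$ (if any) is removed while its specification is kept. *)

theory Defs
  imports Main
begin

type_synonym var = string     (* program variables, including ''this'' and ''result'' *)
type_synonym mname = string
type_synonym cname = string

datatype name = Trait string | Class cname

(* Besides the connectives and atoms that the typing
   rules need (x : C, x = y, x.m() = y), arbitrary atoms of the underlying logic are
   represented by FAtom a xs, where xs lists the free variables of the atom. *)
datatype 'a form =
    FTrue
  | FConj "'a form" "'a form"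
  | FImp "'a form" "'a form"
  | FType var name
  | FEq var var
  | FGet var mname var               (* x.m() = y *)
  | FAtom 'a "var list"

fun fvars :: "'a form \<Rightarrow> var set" where
  "fvars FTrue = {}"
| "fvars (FConj p q) = fvars p \<union> fvars q"
| "fvars (FImp p q) = fvars p \<union> fvars q"
| "fvars (FType x c) = {x}"
| "fvars (FEq x y) = {x, y}"
| "fvars (FGet x m y) = {x, y}"
| "fvars (FAtom a xs) = set xs"

fun fsubst :: "(var \<Rightarrow> var) \<Rightarrow> 'a form \<Rightarrow> 'a form" where
  "fsubst \<sigma> FTrue = FTrue"
| "fsubst \<sigma> (FConj p q) = FConj (fsubst \<sigma> p) (fsubst \<sigma> q)"
| "fsubst \<sigma> (FImp p q) = FImp (fsubst \<sigma> p) (fsubst \<sigma> q)"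
| "fsubst \<sigma> (FType x c) = FType (\<sigma> x) c"
| "fsubst \<sigma> (FEq x y) = FEq (\<sigma> x) (\<sigma> y)"
| "fsubst \<sigma> (FGet x m y) = FGet (\<sigma> x) m (\<sigma> y)"
| "fsubst \<sigma> (FAtom a xs) = FAtom a (map \<sigma> xs)"

definition conjs :: "'a form list \<Rightarrow> 'a form" where
  "conjs ps = foldr FConj ps FTrue"

type_synonym 'a spec = "'a form \<times> 'a form"

definition Pre :: "'a spec \<Rightarrow> 'a form" where "Pre S = fst S"
definition Post :: "'a spec \<Rightarrow> 'a form" where "Post S = snd S"

definition spec_subst :: "(var \<Rightarrow> var) \<Rightarrow> 'a spec \<Rightarrow> 'a spec" where
  "spec_subst \<sigma> S = (fsubst \<sigma> (Pre S), fsubst \<sigma> (Post S))"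

definition spec_vars :: "'a spec \<Rightarrow> var set" where
  "spec_vars S = fvars (Pre S) \<union> fvars (Post S)"

datatype expr = Var var | Call expr mname "expr list" | New cname "expr list"

datatype 'a mhead = MH "'a spec" cname mname "(cname \<times> var) list"

fun hd_spec :: "'a mhead \<Rightarrow> 'a spec" where "hd_spec (MH S C m ps) = S"
fun hd_ret :: "'a mhead \<Rightarrow> cname" where "hd_ret (MH S C m ps) = C"
fun hd_name :: "'a mhead \<Rightarrow> mname" where "hd_name (MH S C m ps) = m"
fun hd_params :: "'a mhead \<Rightarrow> (cname \<times> var) list" where "hd_params (MH S C m ps) = ps"

(* method  MH e?;  (abstract iff the body is None) *)
datatype 'a meth = MD "'a mhead" "expr option"

fun m_head :: "'a meth \<Rightarrow> 'a mhead" where "m_head (MD h e) = h"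

record 'a body =
  is_interface :: bool
  impls :: "cname list"
  meths :: "'a meth list"

datatype 'a texpr = EBody "'a body" | ETrait string | EPlus "'a texpr" "'a texpr"
  | EMakeAbstract "'a texpr" mname

(* declaration table Ds: names are unique, so Ds is a (partial) map *)
type_synonym 'a decls = "name \<Rightarrow> 'a texpr option"

(* Body[makeAbstract m] = Body' *)
definition make_abstract :: "'a body \<Rightarrow> mname \<Rightarrow> 'a body \<Rightarrow> bool" where
  "make_abstract b m b' \<longleftrightarrow>
     (\<exists>Ms1 Ms2 h e. meths b = Ms1 @ [MD h e] @ Ms2 \<and> hd_name h = m \<and>
        b' = b\<lparr>meths := Ms1 @ [MD h None] @ Ms2\<rparr>)"

definition methods_of :: "'a decls \<Rightarrow> name \<Rightarrow> 'a meth list" where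
  "methods_of Ds n = (case Ds n of Some (EBody b) \<Rightarrow> meths b | _ \<Rightarrow> [])"

definition getters :: "'a decls \<Rightarrow> cname \<Rightarrow> ('a spec \<times> cname \<times> mname) list" where
  "getters Ds C = [(hd_spec h, hd_ret h, hd_name h).
                     M \<leftarrow> methods_of Ds (Class C), h \<leftarrow> [m_head M],
                     M = MD h None \<and> hd_params h = []]"

definition direct_super :: "'a decls \<Rightarrow> name \<Rightarrow> name \<Rightarrow> bool" where
  "direct_super Ds n n' \<longleftrightarrow>
     (\<exists>b c. Ds n = Some (EBody b) \<and> c \<in> set (impls b) \<and> n' = Class c)"

definition subtype :: "'a decls \<Rightarrow> name \<Rightarrow> name \<Rightarrow> bool" where
  "subtype Ds = (direct_super Ds)\<^sup>*\<^sup>*"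

section \<open>Typing judgment  \<Gamma> \<turnstile> e : C \<stileturn> P \<Turnstile> P'\<close>

definition res :: var where "res = ''result''"
definition this :: var where "this = ''this''"

definition fresh_vars :: "var list \<Rightarrow> (var \<rightharpoonup> name) \<Rightarrow> var set \<Rightarrow> bool" where
  "fresh_vars xs \<Gamma> used \<longleftrightarrow> distinct xs \<and>
     (\<forall>x\<in>set xs. x \<noteq> res \<and> x \<noteq> this \<and> x \<notin> dom \<Gamma> \<and> x \<notin> used)"

definition upd_res :: "var \<Rightarrow> var \<Rightarrow> var" where
  "upd_res x' = (\<lambda>v. if v = res then x' else v)"

inductive typing :: "'a decls \<Rightarrow> (var \<rightharpoonup> name) \<Rightarrow> expr \<Rightarrow> name \<Rightarrow> 'a form \<Rightarrow> 'a form \<Rightarrow> bool"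
  for Ds :: "'a decls" where
  T_Var: "\<Gamma> x = Some C \<Longrightarrow>
     typing Ds \<Gamma> (Var x) C (FConj (FType res C) (FEq res x)) FTrue"
| T_Call: "\<lbrakk> typing Ds \<Gamma> e0 C0 P0 P0';
     MD (MH S C m ps) eo \<in> set (methods_of Ds C0);
     length es = length ps; length Ps = length ps; length Ps' = length ps;
     \<forall>i<length ps. typing Ds \<Gamma> (es ! i) (Class (fst (ps ! i))) (Ps ! i) (Ps' ! i);
     length xs' = length ps;
     fresh_vars (x0' # xs') \<Gamma>
        (fvars P0 \<union> fvars P0' \<union> \<Union>(fvars ` set Ps) \<union> \<Union>(fvars ` set Ps') \<union> spec_vars S
         \<union> set (map snd ps));
     S' = spec_subst (\<lambda>v. if v = this then x0'
                           else (case map_of (zip (map snd ps) xs') v of Some y \<Rightarrow> y | None \<Rightarrow> v)) S \<rbrakk>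
   \<Longrightarrow> typing Ds \<Gamma> (Call e0 m es) (Class C)
         (conjs ([FType res (Class C), fsubst (upd_res x0') P0]
                 @ map (\<lambda>(P, x'). fsubst (upd_res x') P) (zip Ps xs')
                 @ [FImp (Pre S') (Post S')]))
         (conjs ([P0'] @ Ps' @ [Pre S']))"
| T_New: "\<lbrakk> gs = getters Ds C;
     length es = length gs; length Ps = length gs; length Ps' = length gs;
     \<forall>i<length gs. typing Ds \<Gamma> (es ! i) (Class (fst (snd (gs ! i)))) (Ps ! i) (Ps' ! i);
     length xs' = length gs;
     fresh_vars xs' \<Gamma>
        (\<Union>(fvars ` set Ps) \<union> \<Union>(fvars ` set Ps') \<union> \<Union>(spec_vars ` fst ` set gs));
     Ss' = map (\<lambda>g. spec_subst (\<lambda>v. if v = this then res else v) (fst g)) gs \<rbrakk>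
   \<Longrightarrow> typing Ds \<Gamma> (New C es) (Class C)
         (conjs (FType res (Class C) #
                 map (\<lambda>i. FConj (fsubst (upd_res (xs' ! i)) (Ps ! i))
                               (FImp (Pre (Ss' ! i)) (FGet res (snd (snd (gs ! i))) (xs' ! i))))
                     [0..<length gs]))
         (conjs (Ps' @ map Pre Ss'))"
| T_Sub: "\<lbrakk> typing Ds \<Gamma> e C P P'; subtype Ds C C' \<rbrakk> \<Longrightarrow> typing Ds \<Gamma> e C' P P'"

(* The verifier:  V Ds P Q  stands for  Ds \<turnstile> P \<Turnstile> Q. *)
type_synonym 'a verifier = "'a decls \<Rightarrow> 'a form \<Rightarrow> 'a form \<Rightarrow> bool"

fun method_ok :: "'a verifier \<Rightarrow> 'a decls \<Rightarrow> name \<Rightarrow> 'a meth \<Rightarrow> bool" where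
  "method_ok V Ds N (MD h None) = True"
| "method_ok V Ds N (MD (MH S C m ps) (Some e)) =
     (let \<Gamma>l = (this, N) # map (\<lambda>(Ci, xi). (xi, Class Ci)) ps;
          \<Gamma>f = conjs (map (\<lambda>(x, T). FType x T) \<Gamma>l)
      in \<exists>P P'. typing Ds (map_of \<Gamma>l) e (Class C) P P' \<and>
               V Ds (conjs [\<Gamma>f, Pre S, P]) (conjs [P', Post S]))"

(* Ds; Name \<turnstile> Body : OK *)
definition body_ok :: "'a verifier \<Rightarrow> 'a decls \<Rightarrow> name \<Rightarrow> 'a body \<Rightarrow> bool" where
  "body_ok V Ds N b \<longleftrightarrow> (\<forall>M\<in>set (meths b). method_ok V Ds N M)"

definition same_iface :: "'a decls \<Rightarrow> name \<Rightarrow> name \<Rightarrow> bool" where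
  "same_iface Ds A B \<longleftrightarrow> (\<exists>b1 b2. Ds A = Some (EBody b1) \<and> Ds B = Some (EBody b2) \<and>
      impls b1 = impls b2 \<and> map m_head (meths b1) = map m_head (meths b2))"

fun tsim :: "name \<Rightarrow> name \<Rightarrow> 'a form \<Rightarrow> 'a form \<Rightarrow> bool" where
  "tsim A B (FConj p q) (FConj p' q') = (tsim A B p p' \<and> tsim A B q q')"
| "tsim A B (FImp p q) (FImp p' q') = (tsim A B p p' \<and> tsim A B q q')"
| "tsim A B (FType x C) (FType y D) =
     (x = y \<and> (C = D \<or> (C = A \<and> D = B) \<or> (C = B \<and> D = A)))"
| "tsim A B p q = (p = q)"

(* Modularity: the verifier reasons about types only through their interfaces
   (implemented interfaces and method specifications), never through implementations;
   hence types with the same interface are interchangeable in verification goals. *)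
definition modular :: "'a verifier \<Rightarrow> bool" where
  "modular V \<longleftrightarrow> (\<forall>Ds A B P Q P2 Q2. same_iface Ds A B \<longrightarrow> tsim A B P P2 \<longrightarrow>
       tsim A B Q Q2 \<longrightarrow> V Ds P Q \<longrightarrow> V Ds P2 Q2)"

end

theory Submission
  imports Defs
begin

text \<open>Making a method abstract changes neither the implemented interfaces nor any method
  header, so the trait and the new declaration have the same interface, and the abstract method
  is trivially OK. Each implemented method stays OK when its receiver type changes from the
  trait to the new declaration: replacing that type in the typing context turns a typing
  derivation into one whose knowledge and obligation differ only in the type atoms of the two
  declarations. Method lookup and subsumption only consult method headers and implemented
  interfaces, which coincide, and argument positions are typed at class names, never at a trait.
  Modularity of the verifier then transfers the verified implication.\<close>

lemma choice_nth_pairs: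
  assumes "\<forall>i<n. \<exists>x y. R i x y"
  shows "\<exists>xs ys. length xs = n \<and> length ys = n \<and> (\<forall>i<n. R i (xs!i) (ys!i))"
proof -
  obtain xys where "length xys = n" and "\<forall>i<n. R i (fst (xys!i)) (snd (xys!i))"
    using assms Skolem_list_nth[where P = "\<lambda>i xy. R i (fst xy) (snd xy)"] by auto
  then show ?thesis
    by (intro exI[of _ "map fst xys"] exI[of _ "map snd xys"]) auto
qed

lemma tsim_refl: "tsim A B p p"
  by (induction p) auto

lemma fvars_tsim: "tsim A B p q \<Longrightarrow> fvars p = fvars q"
  by (induction A B p q rule: tsim.induct) auto

lemma tsim_fsubst: "tsim A B p q \<Longrightarrow> tsim A B (fsubst \<sigma> p) (fsubst \<sigma> q)"
  by (induction A B p q rule: tsim.induct) auto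

lemma tsim_conjs: "list_all2 (tsim A B) ps qs \<Longrightarrow> tsim A B (conjs ps) (conjs qs)"
  by (induction rule: list_all2_induct) (auto simp: conjs_def)

lemma list_all2_tsim_refl: "list_all2 (tsim A B) ps ps"
  by (simp add: list_all2_refl tsim_refl)

lemma fvars_list_all2_tsim:
  "list_all2 (tsim A B) ps qs \<Longrightarrow> \<Union>(fvars ` set ps) = \<Union>(fvars ` set qs)"
  by (induction rule: list_all2_induct) (auto simp: fvars_tsim)

lemma same_iface_method_head:
  assumes "same_iface Ds A B" "MD h eo \<in> set (methods_of Ds A)"
  shows "\<exists>eo'. MD h eo' \<in> set (methods_of Ds B)"
proof -
  obtain b1 b2 where d: "Ds A = Some (EBody b1)" "Ds B = Some (EBody b2)"
    and heads: "map m_head (meths b1) = map m_head (meths b2)"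
    using assms(1) unfolding same_iface_def by blast
  have "h \<in> m_head ` set (meths b1)"
    using assms(2) d by (force simp: methods_of_def)
  then obtain M where "M \<in> set (meths b2)" "m_head M = h"
    using heads by (metis list.set_map imageE)
  moreover obtain h' eo' where "M = MD h' eo'"
    by (cases M)
  ultimately show ?thesis
    using d by (auto simp: methods_of_def)
qed

lemma same_iface_subtype:
  assumes "same_iface Ds A B" "subtype Ds A C" "C \<noteq> A"
  shows "subtype Ds B C"
proof -
  obtain D where "direct_super Ds A D" "subtype Ds D C"
    using assms(2,3) unfolding subtype_def by (metis converse_rtranclpE)
  moreover have "direct_super Ds B D"
    using assms(1) \<open>direct_super Ds A D\<close> unfolding same_iface_def direct_super_def by auto
  ultimately show ?thesis
    unfolding subtype_def by (meson converse_rtranclp_into_rtranclp)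
qed

definition subst_type :: "name \<Rightarrow> name \<Rightarrow> name \<Rightarrow> name" where
  "subst_type A B T = (if T = A then B else T)"

lemma subst_type_Class: "\<forall>c. A \<noteq> Class c \<Longrightarrow> subst_type A B (Class c) = Class c"
  by (auto simp: subst_type_def)

lemma typing_args_subst_type:
  assumes "\<forall>i<n. \<exists>C2 P2 P2'. typing Ds \<Gamma> (es!i) C2 P2 P2' \<and>
             C2 \<in> {Class (K i), subst_type A B (Class (K i))} \<and>
             tsim A B (Ps!i) P2 \<and> tsim A B (Ps'!i) P2'"
    and "\<forall>c. A \<noteq> Class c" and "length Ps = n" and "length Ps' = n"
  shows "\<exists>Qs Qs'. length Qs = n \<and> length Qs' = n \<and>
           (\<forall>i<n. typing Ds \<Gamma> (es!i) (Class (K i)) (Qs!i) (Qs'!i)) \<and>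
           list_all2 (tsim A B) Ps Qs \<and> list_all2 (tsim A B) Ps' Qs'"
proof -
  have "\<forall>i<n. \<exists>Q Q'. typing Ds \<Gamma> (es!i) (Class (K i)) Q Q' \<and>
          tsim A B (Ps!i) Q \<and> tsim A B (Ps'!i) Q'"
    using assms(1) by (simp add: subst_type_Class[OF assms(2)])
  from choice_nth_pairs[OF this] obtain Qs Qs' where "length Qs = n" "length Qs' = n"
    and "\<forall>i<n. typing Ds \<Gamma> (es!i) (Class (K i)) (Qs!i) (Qs'!i) \<and>
       tsim A B (Ps!i) (Qs!i) \<and> tsim A B (Ps'!i) (Qs'!i)"
    by blast
  then show ?thesis
    using assms(3,4) by (intro exI[of _ Qs] exI[of _ Qs']) (auto simp: list_all2_conv_all_nth)
qed

text \<open>A derivation ending in a subsumption to the trait type from another type cannot be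
  retargeted to the new type, so the result type is only determined up to the substitution.\<close>

lemma typing_subst_type:
  assumes "typing Ds \<Gamma> e C P P'" and "same_iface Ds A B" and "\<forall>c. A \<noteq> Class c"
  shows "\<exists>C2 P2 P2'. typing Ds (map_option (subst_type A B) \<circ> \<Gamma>) e C2 P2 P2' \<and>
           C2 \<in> {C, subst_type A B C} \<and> tsim A B P P2 \<and> tsim A B P' P2'"
  using assms(1)
proof (induction rule: typing.induct)
  case (T_Var \<Gamma> x C)
  let ?C2 = "subst_type A B C"
  have "typing Ds (map_option (subst_type A B) \<circ> \<Gamma>) (Var x) ?C2
          (FConj (FType res ?C2) (FEq res x)) FTrue"
    using T_Var by (intro typing.T_Var) simp
  moreover have "tsim A B (FConj (FType res C) (FEq res x)) (FConj (FType res ?C2) (FEq res x))"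
    by (simp add: subst_type_def)
  ultimately show ?case
    using tsim_refl by blast
next
  case (T_Call \<Gamma> e0 C0 P0 P0' S C m ps eo es Ps Ps' xs' x0' S')
  let ?\<Gamma>' = "map_option (subst_type A B) \<circ> \<Gamma>"
  from T_Call.IH(1) obtain C0' Q0 Q0' where recv: "typing Ds ?\<Gamma>' e0 C0' Q0 Q0'"
    "C0' \<in> {C0, subst_type A B C0}" "tsim A B P0 Q0" "tsim A B P0' Q0'"
    by blast
  have "\<exists>eo'. MD (MH S C m ps) eo' \<in> set (methods_of Ds C0')"
    using recv(2) T_Call.hyps(2) same_iface_method_head[OF assms(2)]
    by (auto simp: subst_type_def split: if_split_asm)
  then obtain eo' where meth: "MD (MH S C m ps) eo' \<in> set (methods_of Ds C0')" ..
  obtain Qs Qs' where args: "length Qs = length ps" "length Qs' = length ps"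
    "\<forall>i<length ps. typing Ds ?\<Gamma>' (es!i) (Class (fst (ps!i))) (Qs!i) (Qs'!i)"
    "list_all2 (tsim A B) Ps Qs" "list_all2 (tsim A B) Ps' Qs'"
    using typing_args_subst_type[of "length ps" Ds ?\<Gamma>' es "\<lambda>i. fst (ps!i)"]
      T_Call.IH(2) assms(3) T_Call.hyps(4,5) by blast
  have "fresh_vars (x0' # xs') ?\<Gamma>'
      (fvars Q0 \<union> fvars Q0' \<union> \<Union>(fvars ` set Qs) \<union> \<Union>(fvars ` set Qs') \<union> spec_vars S
       \<union> set (map snd ps))"
    using T_Call.hyps(7) fvars_tsim[OF recv(3)] fvars_tsim[OF recv(4)]
      fvars_list_all2_tsim[OF args(4)] fvars_list_all2_tsim[OF args(5)]
    by (simp add: fresh_vars_def)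
  then have typed: "typing Ds ?\<Gamma>' (Call e0 m es) (Class C)
      (conjs ([FType res (Class C), fsubst (upd_res x0') Q0]
              @ map (\<lambda>(P, x'). fsubst (upd_res x') P) (zip Qs xs')
              @ [FImp (Pre S') (Post S')]))
      (conjs ([Q0'] @ Qs' @ [Pre S']))"
    using typing.T_Call[OF recv(1) meth T_Call.hyps(3) args(1-3) T_Call.hyps(6) _ T_Call.hyps(8)]
    by blast
  have args_knowledge: "list_all2 (tsim A B) (map (\<lambda>(P, x'). fsubst (upd_res x') P) (zip Ps xs'))
      (map (\<lambda>(P, x'). fsubst (upd_res x') P) (zip Qs xs'))"
    using args(4) T_Call.hyps(4,6) args(1)
    by (auto simp: list_all2_conv_all_nth tsim_fsubst)
  show ?case
    by (rule exI[of _ "Class C"], (rule exI)+, rule conjI, rule typed)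
      (simp_all add: recv(3,4) args(5) args_knowledge tsim_conjs list_all2_appendI
        tsim_refl tsim_fsubst)
next
  case (T_New gs C es Ps Ps' \<Gamma> xs' Ss')
  let ?\<Gamma>' = "map_option (subst_type A B) \<circ> \<Gamma>"
  obtain Qs Qs' where args: "length Qs = length gs" "length Qs' = length gs"
    "\<forall>i<length gs. typing Ds ?\<Gamma>' (es!i) (Class (fst (snd (gs!i)))) (Qs!i) (Qs'!i)"
    "list_all2 (tsim A B) Ps Qs" "list_all2 (tsim A B) Ps' Qs'"
    using typing_args_subst_type[of "length gs" Ds ?\<Gamma>' es "\<lambda>i. fst (snd (gs!i))"]
      T_New.IH assms(3) T_New.hyps(3,4) by blast
  have "fresh_vars xs' ?\<Gamma>'
      (\<Union>(fvars ` set Qs) \<union> \<Union>(fvars ` set Qs') \<union> \<Union>(spec_vars ` fst ` set gs))"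
    using T_New.hyps(6) fvars_list_all2_tsim[OF args(4)] fvars_list_all2_tsim[OF args(5)]
    by (simp add: fresh_vars_def)
  then have typed: "typing Ds ?\<Gamma>' (New C es) (Class C)
      (conjs (FType res (Class C) #
              map (\<lambda>i. FConj (fsubst (upd_res (xs' ! i)) (Qs ! i))
                            (FImp (Pre (Ss' ! i)) (FGet res (snd (snd (gs ! i))) (xs' ! i))))
                  [0..<length gs]))
      (conjs (Qs' @ map Pre Ss'))"
    using typing.T_New[OF T_New.hyps(1,2) args(1-3) T_New.hyps(5) _ T_New.hyps(7)] by blast
  have args_knowledge: "list_all2 (tsim A B)
      (map (\<lambda>i. FConj (fsubst (upd_res (xs' ! i)) (Ps ! i))
                    (FImp (Pre (Ss' ! i)) (FGet res (snd (snd (gs ! i))) (xs' ! i))))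
           [0..<length gs])
      (map (\<lambda>i. FConj (fsubst (upd_res (xs' ! i)) (Qs ! i))
                    (FImp (Pre (Ss' ! i)) (FGet res (snd (snd (gs ! i))) (xs' ! i))))
           [0..<length gs])"
    using args(1,4) by (auto simp: list_all2_conv_all_nth tsim_fsubst tsim_refl)
  show ?case
    by (rule exI[of _ "Class C"], (rule exI)+, rule conjI, rule typed)
      (simp_all add: args(5) args_knowledge tsim_conjs list_all2_appendI list_all2_tsim_refl
        tsim_refl)
next
  case (T_Sub \<Gamma> e C P P' C')
  let ?\<Gamma>' = "map_option (subst_type A B) \<circ> \<Gamma>"
  from T_Sub.IH obtain C2 P2 P2' where typed: "typing Ds ?\<Gamma>' e C2 P2 P2'"
    and C2: "C2 \<in> {C, subst_type A B C}" and knowledge: "tsim A B P P2" "tsim A B P' P2'"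
    by blast
  have "typing Ds ?\<Gamma>' e C' P2 P2' \<or> typing Ds ?\<Gamma>' e (subst_type A B C') P2 P2'"
  proof (cases "C2 = C")
    case True
    then show ?thesis
      using typing.T_Sub[OF typed] T_Sub.hyps(2) by simp
  next
    case False
    then have "C = A" "C2 = B"
      using C2 by (auto simp: subst_type_def split: if_split_asm)
    show ?thesis
    proof (cases "C' = A")
      case True
      then show ?thesis
        using typed \<open>C2 = B\<close> by (simp add: subst_type_def)
    next
      case False
      then have "subtype Ds C2 C'"
        using same_iface_subtype[OF assms(2)] T_Sub.hyps(2) \<open>C = A\<close> \<open>C2 = B\<close> by simp
      then show ?thesis
        using typing.T_Sub[OF typed] by simp
    qed
  qed
  then show ?case
    using knowledge by blast
qed

lemma method_ok_same_iface:
  assumes "modular V" and "same_iface Ds A B" and "\<forall>c. A \<noteq> Class c"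
    and "method_ok V Ds A M"
  shows "method_ok V Ds B M"
proof -
  obtain S C m ps eo where M: "M = MD (MH S C m ps) eo"
    by (metis mhead.exhaust meth.exhaust)
  show ?thesis
  proof (cases eo)
    case (Some e)
    let ?params = "map (\<lambda>(Ci, xi). (xi, Class Ci)) ps"
    let ?\<Gamma>A = "(this, A) # ?params" and ?\<Gamma>B = "(this, B) # ?params"
    let ?types = "\<lambda>\<Gamma>l. conjs (map (\<lambda>(x, T). FType x T) \<Gamma>l)"
    have "\<exists>P P'. typing Ds (map_of ?\<Gamma>A) e (Class C) P P' \<and>
        V Ds (conjs [?types ?\<Gamma>A, Pre S, P]) (conjs [P', Post S])"
      using assms(4) by (simp add: M Some Let_def)
    then obtain P P' where typed: "typing Ds (map_of ?\<Gamma>A) e (Class C) P P'"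
      and verified: "V Ds (conjs [?types ?\<Gamma>A, Pre S, P]) (conjs [P', Post S])"
      by blast
    have "map (\<lambda>(x, T). (x, subst_type A B T)) ?\<Gamma>A = ?\<Gamma>B"
      using assms(3) by (induction ps) (auto simp: subst_type_def)
    then have "map_of ?\<Gamma>B = map_option (subst_type A B) \<circ> map_of ?\<Gamma>A"
      by (metis map_of_map)
    then obtain P2 P2' where typed': "typing Ds (map_of ?\<Gamma>B) e (Class C) P2 P2'"
      and knowledge: "tsim A B P P2" and obligation: "tsim A B P' P2'"
      using typing_subst_type[OF typed assms(2,3)] subst_type_Class[OF assms(3)] by auto
    have "tsim A B (?types ?\<Gamma>A) (?types ?\<Gamma>B)"
      by (intro tsim_conjs) (simp add: list_all2_tsim_refl)
    then have "tsim A B (conjs [?types ?\<Gamma>A, Pre S, P]) (conjs [?types ?\<Gamma>B, Pre S, P2])"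
      using knowledge by (intro tsim_conjs) (simp add: tsim_refl)
    moreover have "tsim A B (conjs [P', Post S]) (conjs [P2', Post S])"
      using obligation by (intro tsim_conjs) (simp add: tsim_refl)
    ultimately have "V Ds (conjs [?types ?\<Gamma>B, Pre S, P2]) (conjs [P2', Post S])"
      using verified assms(1,2) unfolding modular_def by blast
    then show ?thesis
      using typed' unfolding M Some method_ok.simps Let_def by blast
  qed (simp add: M)
qed

lemma body_ok_same_iface:
  assumes "modular V" and "same_iface Ds A B" and "\<forall>c. A \<noteq> Class c"
    and "body_ok V Ds A b"
  shows "body_ok V Ds B b"
  using method_ok_same_iface[OF assms(1-3)] assms(4) unfolding body_ok_def by blast

lemma make_abstract_same_iface:
  assumes "make_abstract b m b'" and "Ds A = Some (EBody b)" and "Ds B = Some (EBody b')"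
  shows "same_iface Ds A B"
  using assms by (auto simp: make_abstract_def same_iface_def)

lemma body_ok_make_abstract:
  assumes "body_ok V Ds N b" and "make_abstract b m b'"
  shows "body_ok V Ds N b'"
  using assms by (auto simp: make_abstract_def body_ok_def)

theorem lemma4p7:
  fixes V :: "'a verifier" and Ds :: "'a decls" and t :: string and N :: name
    and b b' :: "'a body" and m :: mname
  assumes "modular V"
    and "Ds (Trait t) = Some (EBody b)"
    and "Ds N = Some (EBody b')"
    and "body_ok V Ds (Trait t) b"
    and "make_abstract b m b'"
  shows "body_ok V Ds N b'"
proof -
  have "same_iface Ds (Trait t) N"
    using make_abstract_same_iface[OF assms(5,2,3)] .
  then have "body_ok V Ds N b"
    using body_ok_same_iface[OF assms(1) _ _ assms(4)] by simp
  then show ?thesis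
    using body_ok_make_abstract[OF _ assms(5)] by blast
qed

end
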